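(* Let $i_1,\dots,i_m\in\mathcal{C}l_{0,m}$ with $i_k^2=-1$, $0\le\mu\le m$, and let $\tau^{F_1,F_2}_y$ be the generalized translation defined in the context. Let $J$ be the set of arrays $\vec j=(j_{\nu,k})\in\{0,1\}^{4\times m}$ with $j_{1,k}+j_{2,k}+j_{3,k}\in\{0,2\}$ and $j_{4,k}=0$ for all $k$. Then \[ \tau^{F_1,F_2}_yf(x)=\frac{1}{4^m}\sum_{\vec j\in J}\sum_{\vec\phi,\vec\gamma\in\{0,1\}^m}c_{\vec j,\vec\phi,\vec\gamma}\prod_{k=\mu}^{1}(i_k)^{j_{1,k}}\prod_{k=1}^{\mu}(-i_k)^{j_{2,k}}\prod_{k=1}^{\mu}(-i_k)^{j_{3,k}}\;\tau_{y^{\vec\phi}}f^{\vec\gamma}(x)\;\prod_{k=\mu+1}^{m}(-i_k)^{j_{3,k}}\prod_{k=\mu+1}^{m}(-i_k)^{j_{2,k}}\prod_{k=m}^{\mu+1}(i_k)^{j_{1,k}}, \] where $\tau_{y^{\vec\phi}}f^{\vec\gamma}(x)=f^{\vec\gamma}(x-y^{\vec\phi})$, $y^{\vec\phi}=((-1)^{\phi_1}y_1,\dots,(-1)^{\phi_m}y_m)$, and $c_{\vec j,\vec\phi,\vec\gamma}=\prod_{k=1}^m(-1)^{(j_{(2\phi_k+\gamma_k+1,k)}+1)(\delta_{(j_{1,k}+j_{2,k}+j_{3,k})}-1)}$ with $\delta_{(\ell)}=1$ if $\ell=0$ and $0$ otherwise.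
   Context: $\mathcal{C}l_{0,m}$ is the real associative algebra generated by $e_1,\dots,e_m$ with $e_ie_j+e_je_i=0$ ($i\ne j$), $e_i^2=-1$; $f:\mathbb{R}^m\to\mathcal{C}l_{0,m}$ is such that all integrals below make sense. $F_1=\{i_1,\dots,i_\mu\}$, $F_2=\{i_{\mu+1},\dots,i_m\}$. $\prod_{k=a}^{b}$ with $a\le b$ is the ordered product in increasing $k$; $\prod_{k=b}^{a}$ is the product in decreasing order of $k$. The geometric Fourier transform is $\mathcal{F}_{F_1,F_2}(f)(u)=(2\pi)^{-m/2}\int_{\mathbb{R}^m}\prod_{k=1}^{\mu}e^{-i_kx_ku_k}\,f(x)\prod_{k=\mu+1}^{m}e^{-i_kx_ku_k}\,dx$ (invertible, with inverse $\mathcal{F}^{-1}_{F_1,F_2}(h)(x)=(2\pi)^{-m/2}\int\prod_{k=\mu}^{1}e^{i_kx_ku_k}h(u)\prod_{k=m}^{\mu+1}e^{i_kx_ku_k}du$). The generalized translation $\tau^{F_1,F_2}_y$ is defined by $\mathcal{F}_{F_1,F_2}(\tau^{F_1,F_2}_yf)(u)=\left(\prod_{k=1}^{\mu}e^{-i_ky_ku_k}\right)\mathcal{F}_{F_1,F_2}(f)(u)\left(\prod_{k=\mu+1}^{m}e^{-i_ky_ku_k}\right)$. For $\vec\gamma\in\{0,1\}^m$, $f^{\vec\gamma}(x)=f((-1)^{\gamma_1}x_1,\dots,(-1)^{\gamma_m}x_m)$. *)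

theory Defs
  imports "HOL-Analysis.Analysis"
begin

definition ordprod :: "nat \<Rightarrow> nat \<Rightarrow> (nat \<Rightarrow> 'a::monoid_mult) \<Rightarrow> 'a" where
  "ordprod a b g = prod_list (map g [a..<Suc b])"

definition revprod :: "nat \<Rightarrow> nat \<Rightarrow> (nat \<Rightarrow> 'a::monoid_mult) \<Rightarrow> 'a" where
  "revprod b a g = prod_list (map g (rev [a..<Suc b]))"

definition blade :: "(nat \<Rightarrow> 'a::monoid_mult) \<Rightarrow> nat set \<Rightarrow> 'a" where
  "blade e A = prod_list (map e (sorted_list_of_set A))"

text \<open>The real algebra 'a, with generators e_1..e_m, is (isomorphic to) Cl_{0,m}:
  e_k^2 = -1, e_k e_l + e_l e_k = 0 (k \<noteq> l), and the 2^m blades form a real basis.\<close>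
definition is_Clifford_0m :: "nat \<Rightarrow> (nat \<Rightarrow> 'a::real_algebra_1) \<Rightarrow> bool" where
  "is_Clifford_0m m e \<longleftrightarrow>
     (\<forall>k\<in>{1..m}. e k * e k = -1) \<and>
     (\<forall>k\<in>{1..m}. \<forall>l\<in>{1..m}. k \<noteq> l \<longrightarrow> e k * e l + e l * e k = 0) \<and>
     inj_on (blade e) (Pow {1..m}) \<and>
     \<not> dependent (blade e ` Pow {1..m}) \<and>
     span (blade e ` Pow {1..m}) = UNIV"

text \<open>Lebesgue measure on R^m, points being (extensional) functions on {1..m}.\<close>
definition Rm :: "nat \<Rightarrow> (nat \<Rightarrow> real) measure" where
  "Rm m = Pi\<^sub>M {1..m} (\<lambda>_. lborel)"

type_synonym 'a clf = "(nat \<Rightarrow> real) \<Rightarrow> 'a"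

text \<open>Geometric Fourier transform F_{F1,F2}, F1 = {i_1..i_mu}, F2 = {i_(mu+1)..i_m}.\<close>
definition geo_FT :: "nat \<Rightarrow> nat \<Rightarrow> (nat \<Rightarrow> 'a::{real_normed_algebra_1,banach,second_countable_topology})
    \<Rightarrow> 'a clf \<Rightarrow> 'a clf" where
  "geo_FT m \<mu> i f u = (2 * pi) powr (- real m / 2) *\<^sub>R
     (\<integral>x. ordprod 1 \<mu> (\<lambda>k. exp ((- (x k * u k)) *\<^sub>R i k)) * f x
           * ordprod (Suc \<mu>) m (\<lambda>k. exp ((- (x k * u k)) *\<^sub>R i k)) \<partial>Rm m)"

definition geo_IFT :: "nat \<Rightarrow> nat \<Rightarrow> (nat \<Rightarrow> 'a::{real_normed_algebra_1,banach,second_countable_topology})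
    \<Rightarrow> 'a clf \<Rightarrow> 'a clf" where
  "geo_IFT m \<mu> i h x = (2 * pi) powr (- real m / 2) *\<^sub>R
     (\<integral>u. revprod \<mu> 1 (\<lambda>k. exp ((x k * u k) *\<^sub>R i k)) * h u
           * revprod m (Suc \<mu>) (\<lambda>k. exp ((x k * u k) *\<^sub>R i k)) \<partial>Rm m)"

definition gen_transl :: "nat \<Rightarrow> nat \<Rightarrow> (nat \<Rightarrow> 'a::{real_normed_algebra_1,banach,second_countable_topology})
    \<Rightarrow> (nat \<Rightarrow> real) \<Rightarrow> 'a clf \<Rightarrow> 'a clf" where
  "gen_transl m \<mu> i y f = geo_IFT m \<mu> i
     (\<lambda>u. ordprod 1 \<mu> (\<lambda>k. exp ((- (y k * u k)) *\<^sub>R i k)) * geo_FT m \<mu> i f u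
          * ordprod (Suc \<mu>) m (\<lambda>k. exp ((- (y k * u k)) *\<^sub>R i k)))"

definition reflect :: "nat \<Rightarrow> (nat \<Rightarrow> nat) \<Rightarrow> (nat \<Rightarrow> real) \<Rightarrow> (nat \<Rightarrow> real)" where
  "reflect m \<gamma> x = (\<lambda>k\<in>{1..m}. (-1) ^ (\<gamma> k) * x k)"

definition fgam :: "nat \<Rightarrow> (nat \<Rightarrow> nat) \<Rightarrow> 'a clf \<Rightarrow> 'a clf" where
  "fgam m \<gamma> f = (\<lambda>x. f (reflect m \<gamma> x))"

definition transl :: "nat \<Rightarrow> (nat \<Rightarrow> real) \<Rightarrow> 'a clf \<Rightarrow> 'a clf" where
  "transl m z g = (\<lambda>x. g (\<lambda>k\<in>{1..m}. x k - z k))"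

definition bits :: "nat \<Rightarrow> (nat \<Rightarrow> nat) set" where
  "bits m = {1..m} \<rightarrow>\<^sub>E {0,1}"

definition jset :: "nat \<Rightarrow> (nat \<times> nat \<Rightarrow> nat) set" where
  "jset m = {j \<in> ({1..4} \<times> {1..m}) \<rightarrow>\<^sub>E {0,1}.
      \<forall>k\<in>{1..m}. j (1,k) + j (2,k) + j (3,k) \<in> {0,2} \<and> j (4,k) = 0}"

definition kdelta :: "nat \<Rightarrow> int" where
  "kdelta l = (if l = 0 then 1 else 0)"

definition coef :: "nat \<Rightarrow> (nat \<times> nat \<Rightarrow> nat) \<Rightarrow> (nat \<Rightarrow> nat) \<Rightarrow> (nat \<Rightarrow> nat) \<Rightarrow> real" where
  "coef m j \<phi> \<gamma> = (\<Prod>k=1..m. (-1::real) powi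
      ((int (j (2 * \<phi> k + \<gamma> k + 1, k)) + 1) * (kdelta (j (1,k) + j (2,k) + j (3,k)) - 1)))"

end

theory Submission
  imports Defs
begin

text \<open>
  For \<open>q\<^sup>2 = -1\<close> one has \<open>e\<^bsup>t q\<^esup> = cos t + q sin t\<close>. Expanding every exponential in the
  inverse-transform integrand of \<open>\<tau>\<^sub>y f(x)\<close> therefore writes it as a sum over \<open>a, b \<in> {0,1}\<^sup>m\<close>
  of products of \<open>cos\<close>/\<open>sin\<close> of \<open>x\<^sub>k u\<^sub>k\<close> and of \<open>y\<^sub>k u\<^sub>k\<close> with \<open>i\<^sub>k\<^bsup>a\<^sub>k\<^esup>\<close> on the outside and
  \<open>(-i\<^sub>k)\<^bsup>b\<^sub>k\<^esup>\<close> on the inside. On the other side, \<open>\<tau>\<^bsub>y\<^sup>\<phi>\<^esub> f\<^sup>\<gamma>(x)\<close> is the inverse transform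
  at \<open>z\<^sub>k = (-1)\<^bsup>\<gamma>\<^sub>k\<^esup> (x\<^sub>k - (-1)\<^bsup>\<phi>\<^sub>k\<^esup> y\<^sub>k)\<close>, and summing these against the signs \<open>c\<^sub>j\<^sub>,\<^sub>\<phi>\<^sub>,\<^sub>\<gamma>\<close>
  recombines, one coordinate at a time, the four exponentials \<open>e\<^bsup>\<plusminus>(x\<^sub>k \<plusminus> y\<^sub>k) u\<^sub>k i\<^sub>k\<^esup>\<close> into
  \<open>4 cos/sin(x\<^sub>k u\<^sub>k) cos/sin(y\<^sub>k u\<^sub>k) i\<^sub>k\<^bsup>j\<^sub>3\<^sub>,\<^sub>k\<^esup>\<close> by the addition formulas. The prefactors
  \<open>(-i\<^sub>k)\<^bsup>j\<^sub>3\<^sub>,\<^sub>k\<^esup>\<close> cancel these powers, and an array in \<open>J\<close> is determined by its first two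
  rows, so both sides agree pointwise up to the factor \<open>4\<^sup>m\<close>; integrating gives the theorem.
\<close>

section \<open>Products of sums in a noncommutative ring\<close>

lemma prod_list_map_sum:
  fixes g :: "'i \<Rightarrow> 'b \<Rightarrow> 'a::semiring_1"
  assumes "distinct l"
  shows "prod_list (map (\<lambda>k. \<Sum>s\<in>S k. g k s) l) =
    (\<Sum>\<sigma>\<in>PiE (set l) S. prod_list (map (\<lambda>k. g k (\<sigma> k)) l))"
  using assms
proof (induction l)
  case Nil
  then show ?case by simp
next
  case (Cons k l)
  then have k: "k \<notin> set l" and IH: "prod_list (map (\<lambda>k. \<Sum>s\<in>S k. g k s) l) =
    (\<Sum>\<sigma>\<in>PiE (set l) S. prod_list (map (\<lambda>k. g k (\<sigma> k)) l))" by auto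
  have upd: "prod_list (map (\<lambda>k'. g k' (if k' = k then s else \<sigma> k')) l) =
      prod_list (map (\<lambda>k'. g k' (\<sigma> k')) l)" for \<sigma> s
    using k by (intro arg_cong[where f = prod_list] map_cong) auto
  have "(\<Sum>\<sigma>\<in>PiE (set (k # l)) S. prod_list (map (\<lambda>k. g k (\<sigma> k)) (k # l)))
      = (\<Sum>(s, \<sigma>)\<in>S k \<times> PiE (set l) S. g k s * prod_list (map (\<lambda>k. g k (\<sigma> k)) l))"
    unfolding list.set PiE_insert_eq sum.reindex[OF inj_combinator[OF k]]
    by (simp add: case_prod_beta upd)
  also have "\<dots> = (\<Sum>s\<in>S k. g k s) * prod_list (map (\<lambda>k. \<Sum>s\<in>S k. g k s) l)"
    by (simp add: IH sum.cartesian_product[symmetric] sum_product)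
  finally show ?case by simp
qed

lemma sum_PiE_Un_mult:
  fixes g h :: "('i \<Rightarrow> 'b) \<Rightarrow> 'a::semiring_0"
  assumes "A \<inter> B = {}"
  shows "(\<Sum>\<sigma>\<in>PiE (A \<union> B) S. g (restrict \<sigma> A) * c * h (restrict \<sigma> B)) =
    (\<Sum>\<sigma>\<in>PiE A S. g \<sigma>) * c * (\<Sum>\<sigma>\<in>PiE B S. h \<sigma>)"
proof -
  have bij: "bij_betw (\<lambda>\<sigma>. (restrict \<sigma> A, restrict \<sigma> B)) (PiE (A \<union> B) S) (PiE A S \<times> PiE B S)"
    by (rule bij_betwI[where g = "merge A B"])
      (use assms in \<open>auto simp: PiE_iff merge_def extensional_def fun_eq_iff\<close>)
  have "(\<Sum>\<sigma>\<in>PiE (A \<union> B) S. g (restrict \<sigma> A) * c * h (restrict \<sigma> B)) =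
      (\<Sum>(\<sigma>, \<tau>)\<in>PiE A S \<times> PiE B S. g \<sigma> * c * h \<tau>)"
    using sum.reindex_bij_betw[OF bij, of "\<lambda>(\<sigma>, \<tau>). g \<sigma> * c * h \<tau>"] by simp
  also have "\<dots> = (\<Sum>\<sigma>\<in>PiE A S. g \<sigma>) * c * (\<Sum>\<sigma>\<in>PiE B S. h \<sigma>)"
    by (simp add: sum.cartesian_product[symmetric] sum_distrib_left sum_distrib_right) (rule sum.swap)
  finally show ?thesis .
qed

lemma prod_list_map_scaleR:
  fixes g :: "'i \<Rightarrow> 'a::real_algebra_1"
  shows "prod_list (map (\<lambda>k. r k *\<^sub>R g k) l) = prod_list (map r l) *\<^sub>R prod_list (map g l)"
  by (induction l) auto

lemma prod_list_map_mult_rev_eq_1: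
  fixes a b :: "'i \<Rightarrow> 'a::monoid_mult"
  assumes "\<And>k. k \<in> set l \<Longrightarrow> a k * b k = 1"
  shows "prod_list (map a l) * prod_list (map b (rev l)) = 1"
  using assms
proof (induction l)
  case (Cons k l)
  have "prod_list (map a (k # l)) * prod_list (map b (rev (k # l))) =
      a k * (prod_list (map a l) * prod_list (map b (rev l))) * b k"
    by (simp add: mult.assoc)
  with Cons show ?case by simp
qed simp

lemma prod_list_sandwich_sum:
  fixes g :: "'i \<Rightarrow> 'b \<Rightarrow> 'a::semiring_1"
  assumes "distinct l1" "distinct l2" "set l1 \<inter> set l2 = {}"
  shows "prod_list (map (\<lambda>k. \<Sum>s\<in>S k. g k s) l1) * c * prod_list (map (\<lambda>k. \<Sum>s\<in>S k. g k s) l2) =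
    (\<Sum>\<sigma>\<in>PiE (set l1 \<union> set l2) S.
       prod_list (map (\<lambda>k. g k (\<sigma> k)) l1) * c * prod_list (map (\<lambda>k. g k (\<sigma> k)) l2))"
proof -
  have restrict: "prod_list (map (\<lambda>k. g k (restrict \<sigma> (set l) k)) l) = prod_list (map (\<lambda>k. g k (\<sigma> k)) l)"
    for \<sigma> and l :: "'i list"
    by (intro arg_cong[where f = prod_list] map_cong) auto
  show ?thesis
    unfolding prod_list_map_sum[OF assms(1)] prod_list_map_sum[OF assms(2)]
      sum_PiE_Un_mult[OF assms(3), symmetric] restrict ..
qed

section \<open>Sandwiches by ordered products\<close>

text \<open>The integrand of \<open>geo_IFT\<close> at \<open>x\<close> is a \<open>rev_sandwich\<close> with factors
  \<open>exp ((x k * u k) *\<^sub>R i k)\<close>; the multipliers defining \<open>gen_transl\<close> form an \<open>ord_sandwich\<close>.\<close>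

definition rev_sandwich :: "nat \<Rightarrow> nat \<Rightarrow> (nat \<Rightarrow> 'a::monoid_mult) \<Rightarrow> 'a \<Rightarrow> 'a" where
  "rev_sandwich \<mu> m g c = revprod \<mu> 1 g * c * revprod m (Suc \<mu>) g"

definition ord_sandwich :: "nat \<Rightarrow> nat \<Rightarrow> (nat \<Rightarrow> 'a::monoid_mult) \<Rightarrow> 'a \<Rightarrow> 'a" where
  "ord_sandwich \<mu> m g c = ordprod 1 \<mu> g * c * ordprod (Suc \<mu>) m g"

lemma atLeastAtMost_split_Suc:
  "\<mu> \<le> m \<Longrightarrow> {1..m} = {1..\<mu>} \<union> {Suc \<mu>..m}"
  by auto

lemma rev_sandwich_sum:
  fixes g :: "nat \<Rightarrow> 'b \<Rightarrow> 'a::semiring_1"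
  assumes "\<mu> \<le> m"
  shows "rev_sandwich \<mu> m (\<lambda>k. \<Sum>s\<in>S k. g k s) c =
    (\<Sum>\<sigma>\<in>PiE {1..m} S. rev_sandwich \<mu> m (\<lambda>k. g k (\<sigma> k)) c)"
  using prod_list_sandwich_sum[of "rev [1..<Suc \<mu>]" "rev [Suc \<mu>..<Suc m]" g S c]
  unfolding rev_sandwich_def revprod_def atLeastAtMost_split_Suc[OF assms]
  by (simp del: upt_Suc add: atLeastLessThanSuc_atLeastAtMost)

lemma ord_sandwich_sum:
  fixes g :: "nat \<Rightarrow> 'b \<Rightarrow> 'a::semiring_1"
  assumes "\<mu> \<le> m"
  shows "ord_sandwich \<mu> m (\<lambda>k. \<Sum>s\<in>S k. g k s) c =
    (\<Sum>\<sigma>\<in>PiE {1..m} S. ord_sandwich \<mu> m (\<lambda>k. g k (\<sigma> k)) c)"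
  using prod_list_sandwich_sum[of "[1..<Suc \<mu>]" "[Suc \<mu>..<Suc m]" g S c]
  unfolding ord_sandwich_def ordprod_def atLeastAtMost_split_Suc[OF assms]
  by (simp del: upt_Suc add: atLeastLessThanSuc_atLeastAtMost)

lemma rev_sandwich_cong:
  assumes "\<mu> \<le> m" "\<And>k. k \<in> {1..m} \<Longrightarrow> g k = h k"
  shows "rev_sandwich \<mu> m g c = rev_sandwich \<mu> m h c"
  unfolding rev_sandwich_def revprod_def using assms
  by (intro arg_cong2[where f = "\<lambda>x y. x * c * y"] arg_cong[where f = prod_list] map_cong)
    (auto simp del: upt_Suc)

lemma ord_sandwich_cong:
  assumes "\<mu> \<le> m" "\<And>k. k \<in> {1..m} \<Longrightarrow> g k = h k"
  shows "ord_sandwich \<mu> m g c = ord_sandwich \<mu> m h c"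
  unfolding ord_sandwich_def ordprod_def using assms
  by (intro arg_cong2[where f = "\<lambda>x y. x * c * y"] arg_cong[where f = prod_list] map_cong)
    (auto simp del: upt_Suc)

lemma rev_sandwich_scaleR:
  fixes g :: "nat \<Rightarrow> 'a::real_algebra_1"
  assumes "\<mu> \<le> m"
  shows "rev_sandwich \<mu> m (\<lambda>k. r k *\<^sub>R g k) c = (\<Prod>k=1..m. r k) *\<^sub>R rev_sandwich \<mu> m g c"
proof -
  have "(\<Prod>k=1..m. r k) = (\<Prod>k=1..\<mu>. r k) * (\<Prod>k=Suc \<mu>..m. r k)"
    unfolding atLeastAtMost_split_Suc[OF assms] by (rule prod.union_disjoint) auto
  then show ?thesis
    by (simp del: upt_Suc add: rev_sandwich_def revprod_def prod_list_map_scaleR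
        prod.distinct_set_conv_list[symmetric] atLeastLessThanSuc_atLeastAtMost)
qed

lemma ord_sandwich_scaleR:
  fixes g :: "nat \<Rightarrow> 'a::real_algebra_1"
  assumes "\<mu> \<le> m"
  shows "ord_sandwich \<mu> m (\<lambda>k. r k *\<^sub>R g k) c = (\<Prod>k=1..m. r k) *\<^sub>R ord_sandwich \<mu> m g c"
proof -
  have "(\<Prod>k=1..m. r k) = (\<Prod>k=1..\<mu>. r k) * (\<Prod>k=Suc \<mu>..m. r k)"
    unfolding atLeastAtMost_split_Suc[OF assms] by (rule prod.union_disjoint) auto
  then show ?thesis
    by (simp del: upt_Suc add: ord_sandwich_def ordprod_def prod_list_map_scaleR
        prod.distinct_set_conv_list[symmetric] atLeastLessThanSuc_atLeastAtMost)
qed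

lemma rev_sandwich_sum_right:
  fixes g :: "nat \<Rightarrow> 'a::semiring_1"
  shows "rev_sandwich \<mu> m g (\<Sum>s\<in>S. c s) = (\<Sum>s\<in>S. rev_sandwich \<mu> m g (c s))"
  by (simp add: rev_sandwich_def sum_distrib_left sum_distrib_right)

lemma ord_sandwich_sum_right:
  fixes g :: "nat \<Rightarrow> 'a::semiring_1"
  shows "ord_sandwich \<mu> m g (\<Sum>s\<in>S. c s) = (\<Sum>s\<in>S. ord_sandwich \<mu> m g (c s))"
  by (simp add: ord_sandwich_def sum_distrib_left sum_distrib_right)

lemma rev_sandwich_scaleR_right:
  fixes g :: "nat \<Rightarrow> 'a::real_algebra_1"
  shows "rev_sandwich \<mu> m g (r *\<^sub>R c) = r *\<^sub>R rev_sandwich \<mu> m g c"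
  by (simp add: rev_sandwich_def)

lemma ord_sandwich_scaleR_right:
  fixes g :: "nat \<Rightarrow> 'a::real_algebra_1"
  shows "ord_sandwich \<mu> m g (r *\<^sub>R c) = r *\<^sub>R ord_sandwich \<mu> m g c"
  by (simp add: ord_sandwich_def)

lemma ord_sandwich_rev_sandwich_cancel:
  assumes "\<mu> \<le> m" "\<forall>k\<in>{1..m}. a k * b k = 1 \<and> b k * a k = 1"
  shows "ord_sandwich \<mu> m a (rev_sandwich \<mu> m b c) = c"
proof -
  have "ordprod 1 \<mu> a * revprod \<mu> 1 b = 1"
    unfolding ordprod_def revprod_def using assms by (intro prod_list_map_mult_rev_eq_1) (auto simp del: upt_Suc)
  then have left: "ordprod 1 \<mu> a * (revprod \<mu> 1 b * z) = z" for z
    by (simp flip: mult.assoc)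
  have right: "revprod m (Suc \<mu>) b * ordprod (Suc \<mu>) m a = 1"
    using prod_list_map_mult_rev_eq_1[of "rev [Suc \<mu>..<Suc m]" b a] assms
    unfolding ordprod_def revprod_def by (auto simp del: upt_Suc)
  show ?thesis
    unfolding ord_sandwich_def rev_sandwich_def by (simp only: mult.assoc left right mult_1_right)
qed

section \<open>Exponentials of a square root of minus one\<close>

lemma exp_scaleR_sqrt_minus_one:
  fixes q :: "'a::{real_normed_algebra_1,banach}"
  assumes q: "q * q = -1"
  shows "exp (t *\<^sub>R q) = cos t *\<^sub>R 1 + sin t *\<^sub>R q"
proof -
  have even_power: "q ^ (2 * k) = (-1) ^ k *\<^sub>R 1" for k
    by (induction k) (simp_all add: power_add mult.assoc q flip: mult_2 power_Suc2 mult.assoc)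
  have series_term: "(t *\<^sub>R q) ^ n /\<^sub>R fact n = (cos_coeff n * t ^ n) *\<^sub>R 1 + (sin_coeff n * t ^ n) *\<^sub>R q" for n
  proof (cases "even n")
    case True
    then obtain k where "n = 2 * k" by blast
    then show ?thesis using even_power[of k] by (simp add: scaleR_power cos_coeff_def sin_coeff_def field_simps)
  next
    case False
    then obtain k where "n = 2 * k + 1" by (meson oddE)
    then show ?thesis using even_power[of k] by (simp add: scaleR_power cos_coeff_def sin_coeff_def field_simps)
  qed
  have "(\<lambda>n. (cos_coeff n * t ^ n) *\<^sub>R 1 + (sin_coeff n * t ^ n) *\<^sub>R q) sums (cos t *\<^sub>R 1 + sin t *\<^sub>R q)"
    using cos_converges[of t] sin_converges[of t] by (intro sums_add sums_scaleR_left) simp_all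
  then show ?thesis
    using exp_converges[of "t *\<^sub>R q"] unfolding series_term by (rule sums_unique2[symmetric])
qed

definition cos_sin :: "nat \<Rightarrow> real \<Rightarrow> real" where
  "cos_sin a t = (if a = 0 then cos t else sin t)"

lemma exp_scaleR_eq_sum_cos_sin:
  fixes q :: "'a::{real_normed_algebra_1,banach}"
  assumes "q * q = -1"
  shows "exp (t *\<^sub>R q) = (\<Sum>a\<in>{0,1}. cos_sin a t *\<^sub>R q ^ a)"
  by (simp add: exp_scaleR_sqrt_minus_one[OF assms] cos_sin_def)

lemma exp_minus_scaleR_eq_sum_cos_sin:
  fixes q :: "'a::{real_normed_algebra_1,banach}"
  assumes "q * q = -1"
  shows "exp ((- t) *\<^sub>R q) = (\<Sum>a\<in>{0,1}. cos_sin a t *\<^sub>R (- q) ^ a)"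
  using exp_scaleR_sqrt_minus_one[OF assms, of "- t"] by (simp add: cos_sin_def)

lemma norm_exp_scaleR_sqrt_minus_one_le:
  fixes q :: "'a::{real_normed_algebra_1,banach}"
  assumes "q * q = -1"
  shows "norm (exp (t *\<^sub>R q)) \<le> 1 + norm q"
proof -
  have "norm (exp (t *\<^sub>R q)) \<le> \<bar>cos t\<bar> + \<bar>sin t\<bar> * norm q"
    unfolding exp_scaleR_sqrt_minus_one[OF assms]
    using norm_triangle_ineq[of "cos t *\<^sub>R (1::'a)" "sin t *\<^sub>R q"] by simp
  also have "\<dots> \<le> 1 + 1 * norm q"
    by (intro add_mono mult_right_mono) (auto simp: abs_cos_le_one abs_sin_le_one)
  finally show ?thesis by simp
qed

lemma minus_power_mult_power:
  fixes q :: "'a::ring_1"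
  assumes "q * q = -1"
  shows "(- q) ^ n * q ^ n = 1 \<and> q ^ n * (- q) ^ n = 1"
proof (induction n)
  case (Suc n)
  have "(- q) ^ Suc n * q ^ Suc n = (- q) ^ n * (- q * q) * q ^ n"
    by (simp only: power_Suc2[of "- q"] power_Suc[of q] mult.assoc)
  moreover have "q ^ Suc n * (- q) ^ Suc n = q ^ n * (q * - q) * (- q) ^ n"
    by (simp only: power_Suc2[of q] power_Suc[of "- q"] mult.assoc)
  ultimately show ?case
    using Suc assms by simp
qed simp

section \<open>The coefficients\<close>

definition coef_factor :: "(nat \<Rightarrow> nat) \<Rightarrow> nat \<Rightarrow> nat \<Rightarrow> real" where
  "coef_factor J p g = (-1::real) powi ((int (J (2 * p + g + 1)) + 1) * (kdelta (J 1 + J 2 + J 3) - 1))"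

lemma coef_eq_prod_coef_factor:
  "coef m j \<phi> \<gamma> = (\<Prod>k=1..m. coef_factor (\<lambda>\<nu>. j (\<nu>, k)) (\<phi> k) (\<gamma> k))"
  by (simp add: coef_def coef_factor_def)

lemma coef_factor_eq:
  "coef_factor J p g = (if J 1 + J 2 + J 3 = 0 then 1 else (-1) ^ Suc (J (2 * p + g + 1)))"
proof -
  have "(-1::real) powi ((int n + 1) * (0 - 1)) = (-1) ^ Suc n" for n
  proof -
    have "(int n + 1) * (0 - 1) = - int (Suc n)" by simp
    then show ?thesis by (simp only: power_int_minus power_int_of_nat) (simp add: power_inverse[symmetric])
  qed
  then show ?thesis
    unfolding coef_factor_def kdelta_def by (simp only: if_distrib[of "\<lambda>d. _ powi ((_ + 1) * (d - 1))"]) simp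
qed

lemma sum_coef_factor_cos_sin:
  fixes X Y U :: real
  assumes J: "(J 1, J 2, J 3) \<in> {(0, 0, 0), (1, 1, 0), (1, 0, 1), (0, 1, 1)}" "J 4 = 0"
  defines "w \<equiv> \<lambda>p g. (-1) ^ g * (X - (-1) ^ p * Y) * U"
  shows "(\<Sum>p\<in>{0,1}. \<Sum>g\<in>{0,1}. coef_factor J p g * cos (w p g)) =
      (if J 3 = 0 then 4 * cos_sin (J 1) (X * U) * cos_sin (J 2) (Y * U) else 0) \<and>
    (\<Sum>p\<in>{0,1}. \<Sum>g\<in>{0,1}. coef_factor J p g * sin (w p g)) =
      (if J 3 = 0 then 0 else 4 * cos_sin (J 1) (X * U) * cos_sin (J 2) (Y * U))"
proof -
  have sum4: "(\<Sum>p\<in>{0,1::nat}. \<Sum>g\<in>{0,1::nat}. h p g) = h 0 0 + h 0 1 + h 1 0 + h 1 1"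
    for h :: "nat \<Rightarrow> nat \<Rightarrow> real"
    by simp
  have w: "w 0 0 = X * U - Y * U" "w 0 1 = - (X * U - Y * U)"
    "w 1 0 = X * U + Y * U" "w 1 1 = - (X * U + Y * U)"
    by (simp_all add: w_def algebra_simps)
  have index: "2 * (0::nat) + 0 + 1 = 1" "2 * (0::nat) + 1 + 1 = 2" "2 * (1::nat) + 0 + 1 = 3"
    "2 * (1::nat) + 1 + 1 = 4"
    by simp_all
  from J(1) consider "J 1 = 0" "J 2 = 0" "J 3 = 0" | "J 1 = 1" "J 2 = 1" "J 3 = 0"
    | "J 1 = 1" "J 2 = 0" "J 3 = 1" | "J 1 = 0" "J 2 = 1" "J 3 = 1"
    by auto
  then show ?thesis
    unfolding sum4 w coef_factor_eq index
    by cases (simp_all add: J(2) cos_sin_def cos_add cos_diff sin_add sin_diff)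
qed

lemma sum_coef_factor_exp:
  fixes q :: "'a::{real_normed_algebra_1,banach}"
  assumes q: "q * q = -1"
    and J: "(J 1, J 2, J 3) \<in> {(0, 0, 0), (1, 1, 0), (1, 0, 1), (0, 1, 1)}" "J 4 = 0"
  shows "(\<Sum>p\<in>{0,1}. \<Sum>g\<in>{0,1}. coef_factor J p g *\<^sub>R exp (((-1) ^ g * (X - (-1) ^ p * Y) * U) *\<^sub>R q)) =
    (4 * cos_sin (J 1) (X * U) * cos_sin (J 2) (Y * U)) *\<^sub>R q ^ J 3"
proof -
  let ?w = "\<lambda>p g. (-1) ^ g * (X - (-1) ^ p * Y) * U"
  have "(\<Sum>p\<in>{0,1}. \<Sum>g\<in>{0,1}. coef_factor J p g *\<^sub>R exp (?w p g *\<^sub>R q)) =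
      (\<Sum>p\<in>{0,1}. \<Sum>g\<in>{0,1}. coef_factor J p g * cos (?w p g)) *\<^sub>R 1 +
      (\<Sum>p\<in>{0,1}. \<Sum>g\<in>{0,1}. coef_factor J p g * sin (?w p g)) *\<^sub>R q"
    unfolding exp_scaleR_sqrt_minus_one[OF q]
    by (simp only: scaleR_add_right scaleR_scaleR sum.distrib scaleR_sum_left)
  also have "\<dots> = (4 * cos_sin (J 1) (X * U) * cos_sin (J 2) (Y * U)) *\<^sub>R q ^ J 3"
  proof -
    have "J 3 = 0 \<or> J 3 = 1"
      using J(1) by auto
    then show ?thesis
      using sum_coef_factor_cos_sin[OF J, of X Y U] by auto
  qed
  finally show ?thesis .
qed

section \<open>The index set J\<close>

lemma bits_eq_PiE: "bits m = PiE {1..m} (\<lambda>_. {0, 1})"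
  by (simp add: bits_def)

lemma jset_column:
  assumes "j \<in> jset m" "k \<in> {1..m}"
  shows "(j (1, k), j (2, k), j (3, k)) \<in> {(0, 0, 0), (1, 1, 0), (1, 0, 1), (0, 1, 1)}" and "j (4, k) = 0"
proof -
  have "j (\<nu>, k) \<in> {0, 1}" if "\<nu> \<in> {1..4}" for \<nu>
    using assms that unfolding jset_def by (auto dest: PiE_mem)
  then have "j (1, k) \<in> {0, 1}" "j (2, k) \<in> {0, 1}" "j (3, k) \<in> {0, 1}"
    by auto
  moreover have "j (1, k) + j (2, k) + j (3, k) \<in> {0, 2}" "j (4, k) = 0"
    using assms unfolding jset_def by auto
  ultimately show "(j (1, k), j (2, k), j (3, k)) \<in> {(0, 0, 0), (1, 1, 0), (1, 0, 1), (0, 1, 1)}"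
    "j (4, k) = 0"
    by auto
qed

lemma jset_third_row: "j \<in> jset m \<Longrightarrow> k \<in> {1..m} \<Longrightarrow> j (3, k) = (j (1, k) + j (2, k)) mod 2"
  using jset_column(1)[of j m k] by auto

lemma bit_add_mod_2:
  "x \<in> {0, 1} \<Longrightarrow> y \<in> {0, 1} \<Longrightarrow> (x + y) mod 2 \<in> {0, 1::nat} \<and> x + y + (x + y) mod 2 \<in> {0, 2}"
  by auto

definition jarray :: "nat \<Rightarrow> (nat \<Rightarrow> nat) \<Rightarrow> (nat \<Rightarrow> nat) \<Rightarrow> nat \<times> nat \<Rightarrow> nat" where
  "jarray m a b = (\<lambda>(\<nu>, k)\<in>{1..4} \<times> {1..m}.
     if \<nu> = 1 then a k else if \<nu> = 2 then b k else if \<nu> = 3 then (a k + b k) mod 2 else 0)"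

lemma jarray_in_jset:
  assumes "a \<in> bits m" "b \<in> bits m"
  shows "jarray m a b \<in> jset m"
proof -
  have "a k \<in> {0, 1} \<and> b k \<in> {0, 1} \<and>
      (a k + b k) mod 2 \<in> {0, 1} \<and> a k + b k + (a k + b k) mod 2 \<in> {0, 2}" if "k \<in> {1..m}" for k
    using assms that bit_add_mod_2 unfolding bits_def by blast
  then show ?thesis
    unfolding jset_def jarray_def by (simp add: PiE_iff)
qed

lemma jarray_rows_apply:
  assumes j: "j \<in> jset m" and k: "k \<in> {1..m}" and nu: "\<nu> \<in> {1..4}"
  shows "jarray m (\<lambda>k\<in>{1..m}. j (1, k)) (\<lambda>k\<in>{1..m}. j (2, k)) (\<nu>, k) = j (\<nu>, k)"
proof -
  have "\<nu> = 1 \<or> \<nu> = 2 \<or> \<nu> = 3 \<or> \<nu> = 4" using nu by auto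
  then show ?thesis
    using k jset_third_row[OF j k] jset_column(2)[OF j k] unfolding jarray_def by (elim disjE) simp_all
qed

lemma jarray_rows:
  assumes "j \<in> jset m"
  shows "jarray m (\<lambda>k\<in>{1..m}. j (1, k)) (\<lambda>k\<in>{1..m}. j (2, k)) = j"
proof -
  have j: "j \<in> ({1..4} \<times> {1..m}) \<rightarrow>\<^sub>E {0, 1}"
    using assms by (simp add: jset_def)
  have "jarray m (\<lambda>k\<in>{1..m}. j (1, k)) (\<lambda>k\<in>{1..m}. j (2, k)) (\<nu>, k) = j (\<nu>, k)" for \<nu> k
  proof (cases "(\<nu>, k) \<in> {1..4} \<times> {1..m}")
    case True
    then show ?thesis
      using jarray_rows_apply[OF assms] by blast
  next
    case False
    then show ?thesis
      using PiE_arb[OF j False] unfolding jarray_def by (simp only: restrict_def if_not_P[OF False] if_False)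
  qed
  then show ?thesis
    by (simp add: fun_eq_iff split_paired_All)
qed

lemma rows_jarray:
  assumes "a \<in> bits m" "b \<in> bits m"
  shows "(\<lambda>k\<in>{1..m}. jarray m a b (1, k)) = a" "(\<lambda>k\<in>{1..m}. jarray m a b (2, k)) = b"
proof -
  have "(\<lambda>k\<in>{1..m}. jarray m a b (1, k)) = restrict a {1..m}"
    "(\<lambda>k\<in>{1..m}. jarray m a b (2, k)) = restrict b {1..m}"
    by (auto simp: jarray_def intro!: restrict_ext)
  then show "(\<lambda>k\<in>{1..m}. jarray m a b (1, k)) = a" "(\<lambda>k\<in>{1..m}. jarray m a b (2, k)) = b"
    using assms PiE_restrict unfolding bits_def by metis+
qed

lemma sum_jset_rows:
  "(\<Sum>j\<in>jset m. G (\<lambda>k\<in>{1..m}. j (1, k)) (\<lambda>k\<in>{1..m}. j (2, k))) = (\<Sum>a\<in>bits m. \<Sum>b\<in>bits m. G a b)"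
proof -
  let ?rows = "\<lambda>j. (\<lambda>k\<in>{1..m}. j (1, k), \<lambda>k\<in>{1..m}. j (2, k))"
  have "bij_betw ?rows (jset m) (bits m \<times> bits m)"
  proof (rule bij_betwI[where g = "\<lambda>(a, b). jarray m a b"])
    show "?rows \<in> jset m \<rightarrow> bits m \<times> bits m"
      using jset_column(1) unfolding bits_def by fastforce
  qed (auto simp del: One_nat_def simp add: jarray_in_jset jarray_rows rows_jarray)
  from sum.reindex_bij_betw[OF this, of "\<lambda>(a, b). G a b"] show ?thesis
    by (simp add: sum.cartesian_product)
qed

section \<open>The pointwise identity\<close>

lemma rev_ord_sandwich_exp_eq_sum_bits:
  fixes i :: "nat \<Rightarrow> 'a::{real_normed_algebra_1,banach}"
  assumes mu: "\<mu> \<le> m" and i: "\<forall>k\<in>{1..m}. i k * i k = -1"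
  shows "rev_sandwich \<mu> m (\<lambda>k. exp ((x k * u k) *\<^sub>R i k))
      (ord_sandwich \<mu> m (\<lambda>k. exp ((- (y k * u k)) *\<^sub>R i k)) c) =
    (\<Sum>a\<in>bits m. \<Sum>b\<in>bits m. rev_sandwich \<mu> m (\<lambda>k. cos_sin (a k) (x k * u k) *\<^sub>R i k ^ a k)
      (ord_sandwich \<mu> m (\<lambda>k. cos_sin (b k) (y k * u k) *\<^sub>R (- i k) ^ b k) c))"
proof -
  have "ord_sandwich \<mu> m (\<lambda>k. exp ((- (y k * u k)) *\<^sub>R i k)) c =
      ord_sandwich \<mu> m (\<lambda>k. \<Sum>b\<in>{0,1}. cos_sin b (y k * u k) *\<^sub>R (- i k) ^ b) c"
    by (rule ord_sandwich_cong[OF mu]) (rule exp_minus_scaleR_eq_sum_cos_sin, use i in blast)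
  also have "\<dots> = (\<Sum>b\<in>bits m. ord_sandwich \<mu> m (\<lambda>k. cos_sin (b k) (y k * u k) *\<^sub>R (- i k) ^ b k) c)"
    unfolding bits_eq_PiE by (rule ord_sandwich_sum[OF mu])
  finally have ord: "ord_sandwich \<mu> m (\<lambda>k. exp ((- (y k * u k)) *\<^sub>R i k)) c = \<dots>" .
  have rev: "rev_sandwich \<mu> m (\<lambda>k. exp ((x k * u k) *\<^sub>R i k)) c' =
      (\<Sum>a\<in>bits m. rev_sandwich \<mu> m (\<lambda>k. cos_sin (a k) (x k * u k) *\<^sub>R i k ^ a k) c')" for c'
  proof -
    have "rev_sandwich \<mu> m (\<lambda>k. exp ((x k * u k) *\<^sub>R i k)) c' =
        rev_sandwich \<mu> m (\<lambda>k. \<Sum>a\<in>{0,1}. cos_sin a (x k * u k) *\<^sub>R i k ^ a) c'"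
      by (rule rev_sandwich_cong[OF mu]) (rule exp_scaleR_eq_sum_cos_sin, use i in blast)
    also have "\<dots> = (\<Sum>a\<in>bits m. rev_sandwich \<mu> m (\<lambda>k. cos_sin (a k) (x k * u k) *\<^sub>R i k ^ a k) c')"
      unfolding bits_eq_PiE by (rule rev_sandwich_sum[OF mu])
    finally show ?thesis .
  qed
  show ?thesis
    unfolding ord rev rev_sandwich_sum_right by (rule sum.swap)
qed

lemma sum_coef_rev_sandwich:
  fixes i :: "nat \<Rightarrow> 'a::{real_normed_algebra_1,banach}"
  assumes mu: "\<mu> \<le> m" and i: "\<forall>k\<in>{1..m}. i k * i k = -1" and j: "j \<in> jset m"
  shows "(\<Sum>\<phi>\<in>bits m. \<Sum>\<gamma>\<in>bits m. coef m j \<phi> \<gamma> *\<^sub>R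
      rev_sandwich \<mu> m (\<lambda>k. exp (((-1) ^ \<gamma> k * (x k - (-1) ^ \<phi> k * y k) * u k) *\<^sub>R i k)) c) =
    (\<Prod>k=1..m. 4 * cos_sin (j (1, k)) (x k * u k) * cos_sin (j (2, k)) (y k * u k)) *\<^sub>R
      rev_sandwich \<mu> m (\<lambda>k. i k ^ j (3, k)) c"
proof -
  define G where "G k p g = coef_factor (\<lambda>\<nu>. j (\<nu>, k)) p g *\<^sub>R
    exp (((-1) ^ g * (x k - (-1) ^ p * y k) * u k) *\<^sub>R i k)" for k p g
  have "coef m j \<phi> \<gamma> *\<^sub>R
      rev_sandwich \<mu> m (\<lambda>k. exp (((-1) ^ \<gamma> k * (x k - (-1) ^ \<phi> k * y k) * u k) *\<^sub>R i k)) c =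
      rev_sandwich \<mu> m (\<lambda>k. G k (\<phi> k) (\<gamma> k)) c" for \<phi> \<gamma>
    by (simp add: G_def coef_eq_prod_coef_factor rev_sandwich_scaleR[OF mu])
  then have "(\<Sum>\<phi>\<in>bits m. \<Sum>\<gamma>\<in>bits m. coef m j \<phi> \<gamma> *\<^sub>R
      rev_sandwich \<mu> m (\<lambda>k. exp (((-1) ^ \<gamma> k * (x k - (-1) ^ \<phi> k * y k) * u k) *\<^sub>R i k)) c) =
      (\<Sum>\<phi>\<in>bits m. \<Sum>\<gamma>\<in>bits m. rev_sandwich \<mu> m (\<lambda>k. G k (\<phi> k) (\<gamma> k)) c)"
    by simp
  also have "\<dots> = (\<Sum>\<phi>\<in>bits m. rev_sandwich \<mu> m (\<lambda>k. \<Sum>g\<in>{0,1}. G k (\<phi> k) g) c)"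
    unfolding bits_eq_PiE
    by (intro sum.cong refl rev_sandwich_sum[OF mu, of "\<lambda>k g. G k (_ k) g", symmetric])
  also have "\<dots> = rev_sandwich \<mu> m (\<lambda>k. \<Sum>p\<in>{0,1}. \<Sum>g\<in>{0,1}. G k p g) c"
    unfolding bits_eq_PiE by (rule rev_sandwich_sum[OF mu, of "\<lambda>k p. \<Sum>g\<in>{0,1}. G k p g", symmetric])
  also have "\<dots> = rev_sandwich \<mu> m (\<lambda>k. (4 * cos_sin (j (1, k)) (x k * u k) *
      cos_sin (j (2, k)) (y k * u k)) *\<^sub>R i k ^ j (3, k)) c"
  proof (rule rev_sandwich_cong[OF mu])
    fix k assume k: "k \<in> {1..m}"
    show "(\<Sum>p\<in>{0,1}. \<Sum>g\<in>{0,1}. G k p g) =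
        (4 * cos_sin (j (1, k)) (x k * u k) * cos_sin (j (2, k)) (y k * u k)) *\<^sub>R i k ^ j (3, k)"
      unfolding G_def using sum_coef_factor_exp[OF i[rule_format, OF k], of "\<lambda>\<nu>. j (\<nu>, k)"] jset_column[OF j k]
      by simp
  qed
  also have "\<dots> = (\<Prod>k=1..m. 4 * cos_sin (j (1, k)) (x k * u k) * cos_sin (j (2, k)) (y k * u k)) *\<^sub>R
      rev_sandwich \<mu> m (\<lambda>k. i k ^ j (3, k)) c"
    by (rule rev_sandwich_scaleR[OF mu])
  finally show ?thesis .
qed

definition prefactor_sandwich ::
    "nat \<Rightarrow> nat \<Rightarrow> (nat \<Rightarrow> 'a::ring_1) \<Rightarrow> (nat \<times> nat \<Rightarrow> nat) \<Rightarrow> 'a \<Rightarrow> 'a" where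
  "prefactor_sandwich \<mu> m i j c =
     rev_sandwich \<mu> m (\<lambda>k. i k ^ j (1, k))
       (ord_sandwich \<mu> m (\<lambda>k. (- i k) ^ j (2, k)) (ord_sandwich \<mu> m (\<lambda>k. (- i k) ^ j (3, k)) c))"

lemma prefactor_sandwich_eq:
  "prefactor_sandwich \<mu> m i j c =
    revprod \<mu> 1 (\<lambda>k. i k ^ j (1, k)) * ordprod 1 \<mu> (\<lambda>k. (- i k) ^ j (2, k))
    * ordprod 1 \<mu> (\<lambda>k. (- i k) ^ j (3, k)) * c * ordprod (Suc \<mu>) m (\<lambda>k. (- i k) ^ j (3, k))
    * ordprod (Suc \<mu>) m (\<lambda>k. (- i k) ^ j (2, k)) * revprod m (Suc \<mu>) (\<lambda>k. i k ^ j (1, k))"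
  by (simp add: prefactor_sandwich_def rev_sandwich_def ord_sandwich_def mult.assoc)

lemma prefactor_sandwich_sum_right:
  "prefactor_sandwich \<mu> m i j (\<Sum>s\<in>S. c s) = (\<Sum>s\<in>S. prefactor_sandwich \<mu> m i j (c s))"
  by (simp add: prefactor_sandwich_def rev_sandwich_sum_right ord_sandwich_sum_right)

lemma prefactor_sandwich_scaleR_right:
  fixes i :: "nat \<Rightarrow> 'a::real_algebra_1"
  shows "prefactor_sandwich \<mu> m i j (r *\<^sub>R c) = r *\<^sub>R prefactor_sandwich \<mu> m i j c"
  by (simp add: prefactor_sandwich_def rev_sandwich_scaleR_right ord_sandwich_scaleR_right)

lemma prefactor_sandwich_sum_coef:
  fixes i :: "nat \<Rightarrow> 'a::{real_normed_algebra_1,banach}"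
  assumes mu: "\<mu> \<le> m" and i: "\<forall>k\<in>{1..m}. i k * i k = -1" and j: "j \<in> jset m"
  shows "prefactor_sandwich \<mu> m i j (\<Sum>\<phi>\<in>bits m. \<Sum>\<gamma>\<in>bits m. coef m j \<phi> \<gamma> *\<^sub>R
      rev_sandwich \<mu> m (\<lambda>k. exp (((-1) ^ \<gamma> k * (x k - (-1) ^ \<phi> k * y k) * u k) *\<^sub>R i k)) c) =
    4 ^ m *\<^sub>R rev_sandwich \<mu> m (\<lambda>k. cos_sin (j (1, k)) (x k * u k) *\<^sub>R i k ^ j (1, k))
      (ord_sandwich \<mu> m (\<lambda>k. cos_sin (j (2, k)) (y k * u k) *\<^sub>R (- i k) ^ j (2, k)) c)"
proof -
  have cancel: "prefactor_sandwich \<mu> m i j (rev_sandwich \<mu> m (\<lambda>k. i k ^ j (3, k)) c) =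
      rev_sandwich \<mu> m (\<lambda>k. i k ^ j (1, k)) (ord_sandwich \<mu> m (\<lambda>k. (- i k) ^ j (2, k)) c)"
  proof -
    have "\<forall>k\<in>{1..m}. (- i k) ^ j (3, k) * i k ^ j (3, k) = 1 \<and> i k ^ j (3, k) * (- i k) ^ j (3, k) = 1"
      using i minus_power_mult_power by blast
    then show ?thesis
      unfolding prefactor_sandwich_def by (simp only: ord_sandwich_rev_sandwich_cancel[OF mu])
  qed
  have "prefactor_sandwich \<mu> m i j (\<Sum>\<phi>\<in>bits m. \<Sum>\<gamma>\<in>bits m. coef m j \<phi> \<gamma> *\<^sub>R
      rev_sandwich \<mu> m (\<lambda>k. exp (((-1) ^ \<gamma> k * (x k - (-1) ^ \<phi> k * y k) * u k) *\<^sub>R i k)) c) =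
      (\<Prod>k=1..m. 4 * cos_sin (j (1, k)) (x k * u k) * cos_sin (j (2, k)) (y k * u k)) *\<^sub>R
      rev_sandwich \<mu> m (\<lambda>k. i k ^ j (1, k)) (ord_sandwich \<mu> m (\<lambda>k. (- i k) ^ j (2, k)) c)"
    by (subst sum_coef_rev_sandwich[OF mu i j]) (simp only: prefactor_sandwich_scaleR_right cancel)
  also have "\<dots> = 4 ^ m *\<^sub>R rev_sandwich \<mu> m (\<lambda>k. cos_sin (j (1, k)) (x k * u k) *\<^sub>R i k ^ j (1, k))
      (ord_sandwich \<mu> m (\<lambda>k. cos_sin (j (2, k)) (y k * u k) *\<^sub>R (- i k) ^ j (2, k)) c)"
    unfolding rev_sandwich_scaleR[OF mu] ord_sandwich_scaleR[OF mu] rev_sandwich_scaleR_right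
    by (simp add: prod.distrib)
  finally show ?thesis .
qed

lemma rev_ord_sandwich_exp_eq_sum_jset:
  fixes i :: "nat \<Rightarrow> 'a::{real_normed_algebra_1,banach}"
  assumes mu: "\<mu> \<le> m" and i: "\<forall>k\<in>{1..m}. i k * i k = -1"
  shows "rev_sandwich \<mu> m (\<lambda>k. exp ((x k * u k) *\<^sub>R i k))
      (ord_sandwich \<mu> m (\<lambda>k. exp ((- (y k * u k)) *\<^sub>R i k)) c) =
    (1 / 4 ^ m) *\<^sub>R (\<Sum>j\<in>jset m. \<Sum>\<phi>\<in>bits m. \<Sum>\<gamma>\<in>bits m. coef m j \<phi> \<gamma> *\<^sub>R
      prefactor_sandwich \<mu> m i j
        (rev_sandwich \<mu> m (\<lambda>k. exp (((-1) ^ \<gamma> k * (x k - (-1) ^ \<phi> k * y k) * u k) *\<^sub>R i k)) c))"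
proof -
  define T where "T a b = rev_sandwich \<mu> m (\<lambda>k. cos_sin (a k) (x k * u k) *\<^sub>R i k ^ a k)
      (ord_sandwich \<mu> m (\<lambda>k. cos_sin (b k) (y k * u k) *\<^sub>R (- i k) ^ b k) c)" for a b
  have "(\<Sum>\<phi>\<in>bits m. \<Sum>\<gamma>\<in>bits m. coef m j \<phi> \<gamma> *\<^sub>R prefactor_sandwich \<mu> m i j
        (rev_sandwich \<mu> m (\<lambda>k. exp (((-1) ^ \<gamma> k * (x k - (-1) ^ \<phi> k * y k) * u k) *\<^sub>R i k)) c)) =
      4 ^ m *\<^sub>R T (\<lambda>k\<in>{1..m}. j (1, k)) (\<lambda>k\<in>{1..m}. j (2, k))" if j: "j \<in> jset m" for j
  proof -
    have "T (\<lambda>k\<in>{1..m}. j (1, k)) (\<lambda>k\<in>{1..m}. j (2, k)) =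
        rev_sandwich \<mu> m (\<lambda>k. cos_sin (j (1, k)) (x k * u k) *\<^sub>R i k ^ j (1, k))
          (ord_sandwich \<mu> m (\<lambda>k. cos_sin (j (2, k)) (y k * u k) *\<^sub>R (- i k) ^ j (2, k)) c)"
    proof -
      have "ord_sandwich \<mu> m (\<lambda>k. cos_sin ((\<lambda>k\<in>{1..m}. j (2, k)) k) (y k * u k) *\<^sub>R
            (- i k) ^ (\<lambda>k\<in>{1..m}. j (2, k)) k) c =
          ord_sandwich \<mu> m (\<lambda>k. cos_sin (j (2, k)) (y k * u k) *\<^sub>R (- i k) ^ j (2, k)) c"
        by (rule ord_sandwich_cong[OF mu]) simp
      then show ?thesis
        unfolding T_def by (simp only:) (rule rev_sandwich_cong[OF mu], simp)
    qed
    then show ?thesis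
      by (simp only: prefactor_sandwich_sum_coef[OF mu i j, symmetric] prefactor_sandwich_sum_right
          prefactor_sandwich_scaleR_right)
  qed
  then have "(\<Sum>j\<in>jset m. \<Sum>\<phi>\<in>bits m. \<Sum>\<gamma>\<in>bits m. coef m j \<phi> \<gamma> *\<^sub>R prefactor_sandwich \<mu> m i j
        (rev_sandwich \<mu> m (\<lambda>k. exp (((-1) ^ \<gamma> k * (x k - (-1) ^ \<phi> k * y k) * u k) *\<^sub>R i k)) c)) =
      (\<Sum>j\<in>jset m. 4 ^ m *\<^sub>R T (\<lambda>k\<in>{1..m}. j (1, k)) (\<lambda>k\<in>{1..m}. j (2, k)))"
    by (rule sum.cong[OF refl])
  also have "\<dots> = 4 ^ m *\<^sub>R (\<Sum>a\<in>bits m. \<Sum>b\<in>bits m. T a b)"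
    by (simp only: scaleR_sum_right[symmetric] sum_jset_rows[of T])
  finally show ?thesis
    unfolding rev_ord_sandwich_exp_eq_sum_bits[OF mu i] by (simp add: T_def)
qed

section \<open>Integration\<close>

lemma borel_measurable_prod_list:
  fixes g :: "'i \<Rightarrow> 'b \<Rightarrow> 'a::{real_normed_algebra_1,second_countable_topology}"
  assumes "\<And>k. k \<in> set l \<Longrightarrow> g k \<in> borel_measurable M"
  shows "(\<lambda>x. prod_list (map (\<lambda>k. g k x) l)) \<in> borel_measurable M"
  using assms by (induction l) auto

lemma norm_prod_list_le:
  fixes g :: "'i \<Rightarrow> 'a::real_normed_algebra_1"
  assumes "\<And>k. k \<in> set l \<Longrightarrow> norm (g k) \<le> B k"
  shows "norm (prod_list (map g l)) \<le> prod_list (map B l)"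
  using assms
proof (induction l)
  case (Cons k l)
  have "norm (prod_list (map g (k # l))) \<le> norm (g k) * norm (prod_list (map g l))"
    by (simp add: norm_mult_ineq)
  also have "\<dots> \<le> B k * prod_list (map B l)"
    using Cons norm_ge_zero[of "g k"] by (intro mult_mono) (auto intro: order_trans[of 0 "norm (g k)"])
  finally show ?case by simp
qed simp

lemma integrable_mult_bounded:
  fixes f :: "'b \<Rightarrow> 'a::{real_normed_algebra,banach,second_countable_topology}"
  assumes f: "integrable M f" and g: "g \<in> borel_measurable M" and h: "h \<in> borel_measurable M"
    and g_le: "\<And>x. norm (g x) \<le> B" and h_le: "\<And>x. norm (h x) \<le> C"
  shows "integrable M (\<lambda>x. g x * f x * h x)"
proof (rule Bochner_Integration.integrable_bound[where f = "\<lambda>x. (B * C) *\<^sub>R f x"])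
  show "integrable M (\<lambda>x. (B * C) *\<^sub>R f x)"
    using f by simp
  show "(\<lambda>x. g x * f x * h x) \<in> borel_measurable M"
    using g h borel_measurable_integrable[OF f] by measurable
  have B: "0 \<le> B" and C: "0 \<le> C"
    using norm_ge_zero g_le h_le order_trans by blast+
  show "AE x in M. norm (g x * f x * h x) \<le> norm ((B * C) *\<^sub>R f x)"
  proof (rule AE_I2)
    fix x
    have "norm (g x * f x * h x) \<le> norm (g x) * norm (f x) * norm (h x)"
      by (metis norm_mult_ineq mult_right_mono norm_ge_zero order_trans)
    also have "\<dots> \<le> B * norm (f x) * C"
      using g_le h_le B by (intro mult_mono) auto
    finally show "norm (g x * f x * h x) \<le> norm ((B * C) *\<^sub>R f x)"
      using B C by (simp add: mult.commute mult.left_commute)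
  qed
qed

lemma borel_measurable_exp_scaleR_component:
  fixes q :: "'a::{real_normed_algebra_1,banach,second_countable_topology}"
  assumes "q * q = -1" and "k \<in> {1..m}"
  shows "(\<lambda>u. exp ((c * u k) *\<^sub>R q)) \<in> borel_measurable (Rm m)"
proof -
  have "(\<lambda>u. u k) \<in> borel_measurable (Rm m)"
    using measurable_component_singleton[OF assms(2), of "\<lambda>_. lborel"] unfolding Rm_def by simp
  then show ?thesis
    unfolding exp_scaleR_sqrt_minus_one[OF assms(1)] by measurable
qed

lemma integrable_rev_sandwich_exp:
  fixes i :: "nat \<Rightarrow> 'a::{real_normed_algebra_1,banach,second_countable_topology}"
  assumes mu: "\<mu> \<le> m" and i: "\<forall>k\<in>{1..m}. i k * i k = -1" and F: "integrable (Rm m) F"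
  shows "integrable (Rm m) (\<lambda>u. rev_sandwich \<mu> m (\<lambda>k. exp ((z k * u k) *\<^sub>R i k)) (F u))"
proof -
  have bounded_factor: "(\<lambda>u. prod_list (map (\<lambda>k. exp ((z k * u k) *\<^sub>R i k)) l)) \<in> borel_measurable (Rm m) \<and>
      (\<forall>u. norm (prod_list (map (\<lambda>k. exp ((z k * u k) *\<^sub>R i k)) l)) \<le> prod_list (map (\<lambda>k. 1 + norm (i k)) l))"
    if "set l \<subseteq> {1..m}" for l
    using that i
    by (auto intro!: borel_measurable_prod_list borel_measurable_exp_scaleR_component norm_prod_list_le
        norm_exp_scaleR_sqrt_minus_one_le)
  have "set (rev [1..<Suc \<mu>]) \<subseteq> {1..m}" "set (rev [Suc \<mu>..<Suc m]) \<subseteq> {1..m}"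
    using mu by auto
  then show ?thesis
    unfolding rev_sandwich_def revprod_def
    using bounded_factor by (intro integrable_mult_bounded[OF F]) blast+
qed

lemma integrable_rev_sandwich:
  fixes f :: "'b \<Rightarrow> 'a::{real_normed_algebra_1,banach,second_countable_topology}"
  shows "integrable M f \<Longrightarrow> integrable M (\<lambda>x. rev_sandwich \<mu> m g (f x))"
  unfolding rev_sandwich_def by simp

lemma integral_rev_sandwich:
  fixes f :: "'b \<Rightarrow> 'a::{real_normed_algebra_1,banach,second_countable_topology}"
  shows "integrable M f \<Longrightarrow> (\<integral>x. rev_sandwich \<mu> m g (f x) \<partial>M) = rev_sandwich \<mu> m g (integral\<^sup>L M f)"
  unfolding rev_sandwich_def by simp

lemma integrable_ord_sandwich:
  fixes f :: "'b \<Rightarrow> 'a::{real_normed_algebra_1,banach,second_countable_topology}"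
  shows "integrable M f \<Longrightarrow> integrable M (\<lambda>x. ord_sandwich \<mu> m g (f x))"
  unfolding ord_sandwich_def by simp

lemma integral_ord_sandwich:
  fixes f :: "'b \<Rightarrow> 'a::{real_normed_algebra_1,banach,second_countable_topology}"
  shows "integrable M f \<Longrightarrow> (\<integral>x. ord_sandwich \<mu> m g (f x) \<partial>M) = ord_sandwich \<mu> m g (integral\<^sup>L M f)"
  unfolding ord_sandwich_def by simp

lemma integrable_prefactor_sandwich:
  fixes f :: "'b \<Rightarrow> 'a::{real_normed_algebra_1,banach,second_countable_topology}"
  shows "integrable M f \<Longrightarrow> integrable M (\<lambda>x. prefactor_sandwich \<mu> m i j (f x))"
  unfolding prefactor_sandwich_def by (intro integrable_rev_sandwich integrable_ord_sandwich)

lemma integral_prefactor_sandwich: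
  fixes f :: "'b \<Rightarrow> 'a::{real_normed_algebra_1,banach,second_countable_topology}"
  shows "integrable M f \<Longrightarrow>
    (\<integral>x. prefactor_sandwich \<mu> m i j (f x) \<partial>M) = prefactor_sandwich \<mu> m i j (integral\<^sup>L M f)"
  unfolding prefactor_sandwich_def
  by (simp add: integral_rev_sandwich integral_ord_sandwich integrable_ord_sandwich)

lemma gen_transl_eq_integral:
  "gen_transl m \<mu> i y f x = (2 * pi) powr (- real m / 2) *\<^sub>R
    (\<integral>u. rev_sandwich \<mu> m (\<lambda>k. exp ((x k * u k) *\<^sub>R i k))
      (ord_sandwich \<mu> m (\<lambda>k. exp ((- (y k * u k)) *\<^sub>R i k)) (geo_FT m \<mu> i f u)) \<partial>Rm m)"
  unfolding gen_transl_def geo_IFT_def rev_sandwich_def ord_sandwich_def ..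

lemma transl_reflect_fgam:
  "transl m (reflect m \<phi> y) (fgam m \<gamma> f) x = f (reflect m \<gamma> (\<lambda>k. x k - (-1) ^ \<phi> k * y k))"
  unfolding transl_def fgam_def reflect_def by (intro arg_cong[where f = f] restrict_ext) simp

lemma transl_reflect_fgam_eq_integral:
  assumes mu: "\<mu> \<le> m" and inversion: "\<forall>z\<in>space (Rm m). f z = geo_IFT m \<mu> i (geo_FT m \<mu> i f) z"
  shows "transl m (reflect m \<phi> y) (fgam m \<gamma> f) x = (2 * pi) powr (- real m / 2) *\<^sub>R
    (\<integral>u. rev_sandwich \<mu> m (\<lambda>k. exp (((-1) ^ \<gamma> k * (x k - (-1) ^ \<phi> k * y k) * u k) *\<^sub>R i k))
      (geo_FT m \<mu> i f u) \<partial>Rm m)"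
proof -
  let ?z = "reflect m \<gamma> (\<lambda>k. x k - (-1) ^ \<phi> k * y k)"
  have "?z \<in> space (Rm m)"
    by (simp add: Rm_def space_PiM reflect_def)
  then have "transl m (reflect m \<phi> y) (fgam m \<gamma> f) x = geo_IFT m \<mu> i (geo_FT m \<mu> i f) ?z"
    using inversion by (simp add: transl_reflect_fgam)
  also have "\<dots> = (2 * pi) powr (- real m / 2) *\<^sub>R
      (\<integral>u. rev_sandwich \<mu> m (\<lambda>k. exp ((?z k * u k) *\<^sub>R i k)) (geo_FT m \<mu> i f u) \<partial>Rm m)"
    unfolding geo_IFT_def rev_sandwich_def ..
  also have "(\<lambda>u. rev_sandwich \<mu> m (\<lambda>k. exp ((?z k * u k) *\<^sub>R i k)) (geo_FT m \<mu> i f u)) =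
      (\<lambda>u. rev_sandwich \<mu> m (\<lambda>k. exp (((-1) ^ \<gamma> k * (x k - (-1) ^ \<phi> k * y k) * u k) *\<^sub>R i k))
        (geo_FT m \<mu> i f u))"
    by (intro ext rev_sandwich_cong[OF mu]) (simp add: reflect_def)
  finally show ?thesis .
qed

theorem theorem9:
  fixes m \<mu> :: nat
    and e i :: "nat \<Rightarrow> 'a::{real_normed_algebra_1,banach,second_countable_topology}"
    and f :: "(nat \<Rightarrow> real) \<Rightarrow> 'a"
    and x y :: "nat \<Rightarrow> real"
  assumes "is_Clifford_0m m e"
    and "\<forall>k\<in>{1..m}. i k * i k = -1"
    and "\<mu> \<le> m"
    and "integrable (Rm m) f"
    and "integrable (Rm m) (geo_FT m \<mu> i f)"
    and "\<forall>z\<in>space (Rm m). f z = geo_IFT m \<mu> i (geo_FT m \<mu> i f) z"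
  shows "gen_transl m \<mu> i y f x =
    (1 / 4 ^ m) *\<^sub>R
    (\<Sum>j\<in>jset m. \<Sum>\<phi>\<in>bits m. \<Sum>\<gamma>\<in>bits m. coef m j \<phi> \<gamma> *\<^sub>R
       (revprod \<mu> 1 (\<lambda>k. i k ^ j (1,k))
        * ordprod 1 \<mu> (\<lambda>k. (- i k) ^ j (2,k))
        * ordprod 1 \<mu> (\<lambda>k. (- i k) ^ j (3,k))
        * transl m (reflect m \<phi> y) (fgam m \<gamma> f) x
        * ordprod (Suc \<mu>) m (\<lambda>k. (- i k) ^ j (3,k))
        * ordprod (Suc \<mu>) m (\<lambda>k. (- i k) ^ j (2,k))
        * revprod m (Suc \<mu>) (\<lambda>k. i k ^ j (1,k))))"
proof -
  note i = assms(2) and mu = assms(3)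
  define c where "c = (2 * pi) powr (- real m / 2)"
  define K where "K \<phi> \<gamma> u = rev_sandwich \<mu> m
    (\<lambda>k. exp (((-1) ^ \<gamma> k * (x k - (-1) ^ \<phi> k * y k) * u k) *\<^sub>R i k)) (geo_FT m \<mu> i f u)" for \<phi> \<gamma> u
  have K: "integrable (Rm m) (K \<phi> \<gamma>)" for \<phi> \<gamma>
    unfolding K_def by (rule integrable_rev_sandwich_exp[OF mu i assms(5)])
  have "gen_transl m \<mu> i y f x = c *\<^sub>R (\<integral>u. (1 / 4 ^ m) *\<^sub>R (\<Sum>j\<in>jset m. \<Sum>\<phi>\<in>bits m. \<Sum>\<gamma>\<in>bits m.
      coef m j \<phi> \<gamma> *\<^sub>R prefactor_sandwich \<mu> m i j (K \<phi> \<gamma> u)) \<partial>Rm m)"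
    unfolding gen_transl_eq_integral rev_ord_sandwich_exp_eq_sum_jset[OF mu i] K_def c_def ..
  also have "\<dots> = (1 / 4 ^ m) *\<^sub>R (\<Sum>j\<in>jset m. \<Sum>\<phi>\<in>bits m. \<Sum>\<gamma>\<in>bits m.
      coef m j \<phi> \<gamma> *\<^sub>R prefactor_sandwich \<mu> m i j (c *\<^sub>R (\<integral>u. K \<phi> \<gamma> u \<partial>Rm m)))"
    using K by (simp add: integral_prefactor_sandwich prefactor_sandwich_scaleR_right scaleR_sum_right
        integrable_prefactor_sandwich mult.commute)
  finally show ?thesis
    by (simp only: K_def c_def transl_reflect_fgam_eq_integral[OF mu assms(6), symmetric]
        prefactor_sandwich_eq)
qed

end
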